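(* Let $n\geq1$ and $p,q>1$ satisfy \[ \frac{p+1}{pq-1}>\frac{n-1}{2},\qquad \frac{n-1}{2}(q-1)<1 . \] Let $\varepsilon>0$ and $C>0$, and suppose $H\in C^1(\mathbb{R}_+)$ and $G\in C^2(\mathbb{R}_+)$ satisfy, for all $t\geq0$, \[ H'(t)\geq C\langle t\rangle^{-\frac{n-1}{2}(q-1)}G(t)^q,\quad H(t)\geq0,\quad H'(t)\geq0, \] \[ G''(t)+2G'(t)\geq C\langle t\rangle^{-\frac{n-1}{2}(p-1)}H(t)^p,\quad G(t)\geq C\varepsilon,\quad G'(t)\geq0 . \] Then for any $M>0$ there exist constants $A>0$ and $T>0$ (possibly depending on $\varepsilon$) such that $G(t)\geq A\langle t\rangle^M$ for all $t\geq T$.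
   Context: $\langle t\rangle:=\sqrt{1+t^2}$, $\mathbb{R}_+=[0,\infty)$. *)

theory Defs
  imports "HOL-Analysis.Analysis"
begin

definition jb :: "real \<Rightarrow> real" where
  "jb t = sqrt (1 + t\<^sup>2)"

end

theory Submission
  imports Defs
begin

text \<open>
  The exponent of a polynomial lower bound for \<open>G\<close> bootstraps. If \<open>G t \<ge> D t^\<alpha>\<close> for large
  \<open>t\<close>, integrating \<open>H' \<ge> C \<langle>t\<rangle>^(-a) G^q\<close> gives \<open>H t \<ge> c t^(q \<alpha> + 1 - a)\<close>; on each window
  \<open>[t - 1, t]\<close> the damped inequality \<open>G'' + 2 G' \<ge> C \<langle>t\<rangle>^(-b) H^p\<close> then bounds \<open>G' t\<close> from
  below by a multiple of \<open>t^(p (q \<alpha> + 1 - a) - b)\<close>, and one more integration gives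
  \<open>G t \<ge> D' t^(p q \<alpha> + \<delta>)\<close> with \<open>\<delta> = p (1 - a) - b + 1\<close>. For \<open>a = (n - 1)/2 (q - 1)\<close> and
  \<open>b = (n - 1)/2 (p - 1)\<close> one has \<open>\<delta> = p + 1 - (n - 1)/2 (p q - 1) > 0\<close>, so starting from
  \<open>G \<ge> C \<epsilon>\<close> every round raises the exponent by at least \<open>\<delta>\<close>.
\<close>

lemma powr_lower_bound_from_derivative:
  fixes f f' :: "real \<Rightarrow> real"
  assumes T: "T > 0" and \<beta>: "\<beta> > 0" and c: "c \<ge> 0"
    and deriv: "\<And>s. s \<ge> T \<Longrightarrow> (f has_real_derivative f' s) (at s)"
    and f'_ge: "\<And>s. s \<ge> T \<Longrightarrow> f' s \<ge> c * s powr (\<beta> - 1)"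
    and f_T: "f T \<ge> 0" and t: "t \<ge> 2 * T"
  shows "f t \<ge> c / \<beta> * (1 - 2 powr (-\<beta>)) * t powr \<beta>"
proof -
  define g where "g s = f s - c / \<beta> * s powr \<beta>" for s
  have "g T \<le> g t"
  proof (rule deriv_nonneg_imp_mono[where a = T and b = t and g = g
        and g' = "\<lambda>s. f' s - c * s powr (\<beta> - 1)"])
    fix s assume s: "s \<in> {T..t}"
    then have "s > 0" using T by simp
    then show "(g has_real_derivative f' s - c * s powr (\<beta> - 1)) (at s)"
      unfolding g_def using deriv s \<beta> by (auto intro!: derivative_eq_intros)
    show "f' s - c * s powr (\<beta> - 1) \<ge> 0" using f'_ge s by simp
  qed (use T t in simp)
  then have f_ge: "f t \<ge> c / \<beta> * (t powr \<beta> - T powr \<beta>)"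
    using f_T unfolding g_def by (simp add: algebra_simps)
  have "T powr \<beta> \<le> (t / 2) powr \<beta>" using T t \<beta> by (intro powr_mono2) auto
  also have "\<dots> = 2 powr (-\<beta>) * t powr \<beta>" by (simp add: powr_divide powr_minus divide_simps)
  finally have "(1 - 2 powr (-\<beta>)) * t powr \<beta> \<le> t powr \<beta> - T powr \<beta>" by (simp add: algebra_simps)
  then show ?thesis
    using f_ge mult_left_mono[of _ _ "c / \<beta>"] c \<beta> by fastforce
qed

lemma damped_inequality_lower_bound:
  fixes g g' :: "real \<Rightarrow> real"
  assumes deriv: "\<And>s. s \<in> {t - 1..t} \<Longrightarrow> (g has_real_derivative g' s) (at s)"
    and ineq: "\<And>s. s \<in> {t - 1..t} \<Longrightarrow> g' s + 2 * g s \<ge> K"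
    and start: "g (t - 1) \<ge> 0"
  shows "g t \<ge> (1 - exp (-2)) / 2 * K"
proof -
  \<comment> \<open>\<open>exp (2 s)\<close> is an integrating factor for \<open>g' + 2 g\<close>.\<close>
  define \<psi> where "\<psi> s = exp (2 * s) * (g s - K / 2)" for s
  have "\<psi> (t - 1) \<le> \<psi> t"
  proof (rule deriv_nonneg_imp_mono[where a = "t - 1" and b = t and g = \<psi>
        and g' = "\<lambda>s. exp (2 * s) * (g' s + 2 * g s - K)"])
    fix s assume s: "s \<in> {t - 1..t}"
    show "(\<psi> has_real_derivative exp (2 * s) * (g' s + 2 * g s - K)) (at s)"
      unfolding \<psi>_def using deriv[OF s] by (auto intro!: derivative_eq_intros simp: algebra_simps)
    show "exp (2 * s) * (g' s + 2 * g s - K) \<ge> 0" using ineq[OF s] by simp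
  qed simp
  have "exp (2 * t) * (- exp (-2) * K / 2) = exp (2 * (t - 1)) * (- K / 2)"
    by (simp add: exp_diff exp_minus field_simps)
  also have "\<dots> \<le> \<psi> (t - 1)"
    unfolding \<psi>_def using start by (intro mult_left_mono) auto
  also have "\<dots> \<le> \<psi> t" by fact
  finally have "exp (2 * t) * (- exp (-2) * K / 2) \<le> exp (2 * t) * (g t - K / 2)"
    unfolding \<psi>_def .
  then have "g t - K / 2 \<ge> - exp (-2) * K / 2" by (rule mult_left_le_imp_le) simp
  then show ?thesis by (simp add: algebra_simps)
qed

lemma powr_ge_mult_powr:
  fixes c x y \<gamma> p :: real
  assumes "c * y powr \<gamma> \<le> x" "c \<ge> 0" "y > 0" "p \<ge> 0"
  shows "c powr p * y powr (\<gamma> * p) \<le> x powr p"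
proof -
  have "(c * y powr \<gamma>) powr p \<le> x powr p" using assms by (intro powr_mono2) auto
  then show ?thesis using assms by (simp add: powr_mult powr_powr)
qed

lemma jb_ge_1: "jb t \<ge> 1"
  unfolding jb_def by simp

lemma jb_mono: "0 \<le> s \<Longrightarrow> s \<le> t \<Longrightarrow> jb s \<le> jb t"
  unfolding jb_def by (simp add: power_mono)

lemma jb_le_sqrt2_mult:
  assumes "t \<ge> 1"
  shows "jb t \<le> sqrt 2 * t"
proof -
  have "1 + t\<^sup>2 \<le> 2 * t\<^sup>2" using assms by (simp add: one_le_power)
  then have "jb t \<le> sqrt (2 * t\<^sup>2)" unfolding jb_def by simp
  also have "\<dots> = sqrt 2 * t" using assms by (simp add: real_sqrt_mult)
  finally show ?thesis .
qed

lemma jb_powr_neg_ge: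
  assumes "e \<ge> 0" "0 \<le> s" "s \<le> t" "t \<ge> 1"
  shows "jb s powr (-e) \<ge> sqrt 2 powr (-e) * t powr (-e)"
proof -
  have "jb s \<le> sqrt 2 * t" using jb_mono[OF assms(2,3)] jb_le_sqrt2_mult[OF assms(4)] by simp
  then have "(sqrt 2 * t) powr (-e) \<le> jb s powr (-e)"
    using assms jb_ge_1[of s] by (intro powr_mono2') auto
  then show ?thesis by (simp add: powr_mult)
qed

lemma jb_powr_le:
  assumes "t \<ge> 1" "M \<ge> 0"
  shows "jb t powr M \<le> sqrt 2 powr M * t powr M"
proof -
  have "jb t powr M \<le> (sqrt 2 * t) powr M"
    using assms jb_le_sqrt2_mult[of t] jb_ge_1[of t] by (intro powr_mono2) auto
  then show ?thesis by (simp add: powr_mult)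
qed

lemma jb_powr_lower_bound_of_powr_lower_bound:
  fixes f :: "real \<Rightarrow> real"
  assumes "A > 0" "M \<ge> 0" and f_ge: "f t \<ge> A * t powr M" and "t \<ge> 1"
  shows "f t \<ge> A / sqrt 2 powr M * jb t powr M"
proof -
  have "A * jb t powr M \<le> A * (sqrt 2 powr M * t powr M)"
    using jb_powr_le[of t M] assms by simp
  also have "\<dots> \<le> sqrt 2 powr M * f t" using f_ge by (simp add: mult.left_commute)
  finally show ?thesis by (simp add: field_simps)
qed

locale damped_coupled_system =
  fixes a b p q C :: real and H H' G G' G'' :: "real \<Rightarrow> real"
  assumes a_nonneg: "a \<ge> 0" and a_less_1: "a < 1" and b_nonneg: "b \<ge> 0"
    and p_pos: "p > 0" and q_pos: "q > 0" and C_pos: "C > 0"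
    and gain_pos: "p * (1 - a) - b + 1 > 0"
    and H_deriv: "\<And>t. t > 0 \<Longrightarrow> (H has_real_derivative H' t) (at t)"
    and G_deriv: "\<And>t. t > 0 \<Longrightarrow> (G has_real_derivative G' t) (at t)"
    and G'_deriv: "\<And>t. t > 0 \<Longrightarrow> (G' has_real_derivative G'' t) (at t)"
    and H_ineq: "\<And>t. t \<ge> 0 \<Longrightarrow> H' t \<ge> C * jb t powr (-a) * G t powr q"
    and H_nonneg: "\<And>t. t \<ge> 0 \<Longrightarrow> H t \<ge> 0"
    and G_ineq: "\<And>t. t \<ge> 0 \<Longrightarrow> G'' t + 2 * G' t \<ge> C * jb t powr (-b) * H t powr p"
    and G'_nonneg: "\<And>t. t \<ge> 0 \<Longrightarrow> G' t \<ge> 0"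
begin

lemma H_ge_powr:
  assumes T: "T \<ge> 1" and D: "D > 0" and \<alpha>: "\<alpha> \<ge> 0"
    and G_ge: "\<And>t. t \<ge> T \<Longrightarrow> G t \<ge> D * t powr \<alpha>"
  obtains c where "c > 0" "\<And>t. t \<ge> 2 * T \<Longrightarrow> H t \<ge> c * t powr (q * \<alpha> + 1 - a)"
proof -
  define \<gamma> where "\<gamma> = q * \<alpha> + 1 - a"
  have \<gamma>: "\<gamma> > 0" unfolding \<gamma>_def using mult_nonneg_nonneg[of q \<alpha>] q_pos \<alpha> a_less_1 by linarith
  define c1 where "c1 = C * sqrt 2 powr (-a) * D powr q"
  have H'_ge: "H' t \<ge> c1 * t powr (\<gamma> - 1)" if t: "t \<ge> T" for t
  proof -
    have "t > 0" using t T by simp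
    have "c1 * t powr (\<gamma> - 1) = C * (sqrt 2 powr (-a) * t powr (-a)) * (D powr q * t powr (\<alpha> * q))"
      unfolding c1_def \<gamma>_def using \<open>t > 0\<close> by (simp add: powr_add[symmetric] algebra_simps)
    also have "\<dots> \<le> C * jb t powr (-a) * G t powr q"
      using C_pos a_nonneg q_pos D \<open>t > 0\<close> t T jb_powr_neg_ge[of a t t] powr_ge_mult_powr[OF G_ge[OF t]]
      by (intro mult_mono mult_left_mono) auto
    also have "\<dots> \<le> H' t" using H_ineq \<open>t > 0\<close> by simp
    finally show ?thesis .
  qed
  have "c1 / \<gamma> * (1 - 2 powr (-\<gamma>)) > 0"
    unfolding c1_def using C_pos D \<gamma> powr_less_one[of 2 "-\<gamma>"] by simp
  moreover have "H t \<ge> c1 / \<gamma> * (1 - 2 powr (-\<gamma>)) * t powr \<gamma>" if "t \<ge> 2 * T" for t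
    by (rule powr_lower_bound_from_derivative[where f' = H'])
      (use \<gamma> T that H'_ge H_deriv H_nonneg C_pos D in \<open>auto simp: c1_def\<close>)
  ultimately show ?thesis using that unfolding \<gamma>_def by blast
qed

lemma G_ge_powr_step:
  assumes T: "T \<ge> 1" and D: "D > 0" and \<alpha>: "\<alpha> \<ge> 0"
    and G_ge: "\<And>t. t \<ge> T \<Longrightarrow> G t \<ge> D * t powr \<alpha>"
  obtains D' T' where "D' > 0" "T' \<ge> 1"
    "\<And>t. t \<ge> T' \<Longrightarrow> G t \<ge> D' * t powr (p * q * \<alpha> + (p * (1 - a) - b + 1))"
proof -
  define \<gamma> where "\<gamma> = q * \<alpha> + 1 - a"
  define \<beta> where "\<beta> = p * \<gamma> - b + 1"
  have \<beta>_eq: "\<beta> = p * q * \<alpha> + (p * (1 - a) - b + 1)"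
    unfolding \<beta>_def \<gamma>_def by (simp add: algebra_simps)
  have \<beta>: "\<beta> > 0" unfolding \<beta>_eq using gain_pos p_pos q_pos \<alpha> by (simp add: add_nonneg_pos)
  obtain c2 where c2: "c2 > 0" and H_ge: "\<And>t. t \<ge> 2 * T \<Longrightarrow> H t \<ge> c2 * t powr \<gamma>"
    using H_ge_powr[OF T D \<alpha> G_ge] unfolding \<gamma>_def by blast
  have \<gamma>: "\<gamma> > 0" unfolding \<gamma>_def using mult_nonneg_nonneg[of q \<alpha>] q_pos \<alpha> a_less_1 by linarith
  define T2 where "T2 = 2 * T + 1"
  define c3 where "c3 = C * sqrt 2 powr (-b) * c2 powr p / 2 powr (\<gamma> * p)"
  have c3: "c3 > 0" unfolding c3_def using C_pos c2 by simp
  have G'_ge: "G' t \<ge> (1 - exp (-2)) / 2 * c3 * t powr (\<beta> - 1)" if t: "t \<ge> T2" for t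
  proof -
    have t_ge: "t \<ge> 2" "t - 1 \<ge> 2 * T" using t T unfolding T2_def by auto
    have "G'' s + 2 * G' s \<ge> c3 * t powr (\<beta> - 1)" if s: "s \<in> {t - 1..t}" for s
    proof -
      have "s \<ge> 2 * T" "t / 2 \<le> s" using s t_ge by auto
      then have "c2 * (t / 2) powr \<gamma> \<le> c2 * s powr \<gamma>"
        using c2 \<gamma> t_ge by (intro mult_left_mono powr_mono2) auto
      also have "\<dots> \<le> H s" using H_ge \<open>s \<ge> 2 * T\<close> .
      finally have "c2 * (t / 2) powr \<gamma> \<le> H s" .
      then have H_pow: "c2 powr p * (t / 2) powr (\<gamma> * p) \<le> H s powr p"
        using c2 t_ge p_pos by (intro powr_ge_mult_powr) auto
      have "c3 * t powr (\<beta> - 1)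
          = C * (sqrt 2 powr (-b) * t powr (-b)) * (c2 powr p * (t / 2) powr (\<gamma> * p))"
        unfolding c3_def \<beta>_def using t_ge by (simp add: powr_divide powr_add[symmetric] algebra_simps)
      also have "\<dots> \<le> C * jb s powr (-b) * H s powr p"
        using H_pow jb_powr_neg_ge[OF b_nonneg, of s t] C_pos s t_ge T
        by (intro mult_mono mult_left_mono) auto
      also have "\<dots> \<le> G'' s + 2 * G' s" using G_ineq[of s] s t_ge by simp
      finally show ?thesis .
    qed
    then show ?thesis
      using damped_inequality_lower_bound[of t G' G'' "c3 * t powr (\<beta> - 1)"]
        G'_deriv G'_nonneg[of "t - 1"] t_ge by (simp add: mult.assoc)
  qed
  show ?thesis
  proof
    show "(1 - exp (-2)) / 2 * c3 / \<beta> * (1 - 2 powr (-\<beta>)) > 0"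
      using c3 \<beta> powr_less_one[of 2 "-\<beta>"] by simp
    show "2 * T2 \<ge> 1" using T unfolding T2_def by simp
    have G_T2: "G T2 \<ge> 0"
      by (rule order_trans[OF mult_nonneg_nonneg G_ge]) (use D T in \<open>auto simp: T2_def\<close>)
    show "G t \<ge> (1 - exp (-2)) / 2 * c3 / \<beta> * (1 - 2 powr (-\<beta>))
        * t powr (p * q * \<alpha> + (p * (1 - a) - b + 1))" if "t \<ge> 2 * T2" for t
      using powr_lower_bound_from_derivative[of T2 \<beta> "(1 - exp (-2)) / 2 * c3" G G' t]
        \<beta> c3 T that G'_ge G_deriv G_T2
      unfolding T2_def \<beta>_eq by simp
  qed
qed

lemma G_ge_powr_iterate:
  assumes pq: "p * q \<ge> 1" and c0: "c0 > 0" and G_ge: "\<And>t. t \<ge> 0 \<Longrightarrow> G t \<ge> c0"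
  shows "\<exists>\<alpha> \<ge> real k * (p * (1 - a) - b + 1). \<exists>D > 0. \<exists>T \<ge> 1. \<forall>t \<ge> T. G t \<ge> D * t powr \<alpha>"
proof (induction k)
  case 0
  show ?case using G_ge c0 by (intro exI[of _ 0] conjI exI[of _ c0] exI[of _ 1]) auto
next
  case (Suc k)
  define \<delta> where "\<delta> = p * (1 - a) - b + 1"
  from Suc obtain \<alpha> D T where \<alpha>: "\<alpha> \<ge> real k * \<delta>" and D: "D > 0" and T: "T \<ge> 1"
    and G_ge_T: "\<And>t. t \<ge> T \<Longrightarrow> G t \<ge> D * t powr \<alpha>" unfolding \<delta>_def by blast
  have "\<alpha> \<ge> 0" using \<alpha> gain_pos mult_nonneg_nonneg[of "real k" \<delta>] unfolding \<delta>_def by linarith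
  obtain D' T' where "D' > 0" "T' \<ge> 1" "\<And>t. t \<ge> T' \<Longrightarrow> G t \<ge> D' * t powr (p * q * \<alpha> + \<delta>)"
    using G_ge_powr_step[OF T D \<open>\<alpha> \<ge> 0\<close> G_ge_T] unfolding \<delta>_def by blast
  moreover have "p * q * \<alpha> + \<delta> \<ge> real (Suc k) * \<delta>"
    using \<alpha> \<open>\<alpha> \<ge> 0\<close> pq mult_right_mono[OF pq \<open>\<alpha> \<ge> 0\<close>] by (simp add: algebra_simps)
  ultimately show ?case unfolding \<delta>_def by blast
qed

lemma G_eventually_ge_powr:
  assumes pq: "p * q \<ge> 1" and c0: "c0 > 0" and G_ge: "\<And>t. t \<ge> 0 \<Longrightarrow> G t \<ge> c0"
  obtains A T where "A > 0" "T \<ge> 1" "\<And>t. t \<ge> T \<Longrightarrow> G t \<ge> A * t powr M"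
proof -
  define \<delta> where "\<delta> = p * (1 - a) - b + 1"
  define k where "k = nat \<lceil>M / \<delta>\<rceil>"
  have "M \<le> real k * \<delta>"
    using gain_pos unfolding k_def \<delta>_def by (simp add: pos_divide_le_eq[symmetric]) linarith
  obtain \<alpha> D T where "\<alpha> \<ge> real k * \<delta>" "D > 0" "T \<ge> 1"
    and G_ge_T: "\<And>t. t \<ge> T \<Longrightarrow> G t \<ge> D * t powr \<alpha>"
    using G_ge_powr_iterate[OF pq c0 G_ge, of k] unfolding \<delta>_def by blast
  with \<open>M \<le> real k * \<delta>\<close> have "M \<le> \<alpha>" by linarith
  have "G t \<ge> D * t powr M" if "t \<ge> T" for t
  proof -
    have "D * t powr M \<le> D * t powr \<alpha>"
      using \<open>M \<le> \<alpha>\<close> \<open>D > 0\<close> \<open>T \<ge> 1\<close> that by (intro mult_left_mono powr_mono) auto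
    also have "\<dots> \<le> G t" using G_ge_T[OF that] .
    finally show ?thesis .
  qed
  with \<open>D > 0\<close> \<open>T \<ge> 1\<close> show ?thesis using that by blast
qed

end

theorem lemma5p2:
  fixes n :: nat and p q \<epsilon> C :: real
    and H H' G G' G'' :: "real \<Rightarrow> real"
  assumes n: "n \<ge> 1"
    and p: "p > 1" and q: "q > 1"
    and cond1: "(p + 1) / (p * q - 1) > (real n - 1) / 2"
    and cond2: "(real n - 1) / 2 * (q - 1) < 1"
    and eps: "\<epsilon> > 0" and Cpos: "C > 0"
    and H_deriv: "\<And>t. t \<ge> 0 \<Longrightarrow> (H has_real_derivative H' t) (at t within {0..})"
    and H'_cont: "continuous_on {0..} H'"
    and G_deriv: "\<And>t. t \<ge> 0 \<Longrightarrow> (G has_real_derivative G' t) (at t within {0..})"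
    and G'_deriv: "\<And>t. t \<ge> 0 \<Longrightarrow> (G' has_real_derivative G'' t) (at t within {0..})"
    and G''_cont: "continuous_on {0..} G''"
    and ineqH: "\<And>t. t \<ge> 0 \<Longrightarrow>
        H' t \<ge> C * jb t powr (- ((real n - 1) / 2 * (q - 1))) * G t powr q"
    and H_nonneg: "\<And>t. t \<ge> 0 \<Longrightarrow> H t \<ge> 0"
    and H'_nonneg: "\<And>t. t \<ge> 0 \<Longrightarrow> H' t \<ge> 0"
    and ineqG: "\<And>t. t \<ge> 0 \<Longrightarrow>
        G'' t + 2 * G' t \<ge> C * jb t powr (- ((real n - 1) / 2 * (p - 1))) * H t powr p"
    and G_lower: "\<And>t. t \<ge> 0 \<Longrightarrow> G t \<ge> C * \<epsilon>"
    and G'_nonneg: "\<And>t. t \<ge> 0 \<Longrightarrow> G' t \<ge> 0"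
  shows "\<forall>M > 0. \<exists>A > 0. \<exists>T > 0. \<forall>t \<ge> T. G t \<ge> A * jb t powr M"
proof -
  have "p * q > 1" using p q by (rule less_1_mult)
  then have gain: "p * (1 - (real n - 1) / 2 * (q - 1)) - (real n - 1) / 2 * (p - 1) + 1 > 0"
    using cond1 by (simp add: field_simps)
  have deriv_at: "(f has_real_derivative d) (at t)"
    if "t > 0" "(f has_real_derivative d) (at t within {0..})" for f :: "real \<Rightarrow> real" and d t
    using that at_within_interior[of t "{0..}"] by simp
  have "(real n - 1) / 2 \<ge> 0" using n by simp
  interpret damped_coupled_system "(real n - 1) / 2 * (q - 1)" "(real n - 1) / 2 * (p - 1)"
    p q C H H' G G' G''
  proof
    show "\<And>t. t > 0 \<Longrightarrow> (H has_real_derivative H' t) (at t)"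
      "\<And>t. t > 0 \<Longrightarrow> (G has_real_derivative G' t) (at t)"
      "\<And>t. t > 0 \<Longrightarrow> (G' has_real_derivative G'' t) (at t)"
      using deriv_at H_deriv G_deriv G'_deriv by auto
  qed (use \<open>(real n - 1) / 2 \<ge> 0\<close> p q cond2 Cpos gain ineqH H_nonneg ineqG G'_nonneg in auto)
  show ?thesis
  proof (intro allI impI)
    fix M :: real assume "M > 0"
    obtain A T where "A > 0" "T \<ge> 1" and G_ge: "\<And>t. t \<ge> T \<Longrightarrow> G t \<ge> A * t powr M"
      using G_eventually_ge_powr[of "C * \<epsilon>" M] \<open>p * q > 1\<close> Cpos eps G_lower by auto
    then have "G t \<ge> A / sqrt 2 powr M * jb t powr M" if "t \<ge> T" for t
      using jb_powr_lower_bound_of_powr_lower_bound \<open>M > 0\<close> that by simp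
    then show "\<exists>A > 0. \<exists>T > 0. \<forall>t \<ge> T. G t \<ge> A * jb t powr M"
      using \<open>A > 0\<close> \<open>T \<ge> 1\<close> by (intro exI[of _ "A / sqrt 2 powr M"] conjI exI[of _ T]) auto
  qed
qed

end
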